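(* Consider the following network, in which every edge has capacity $2$. - Two inputs $s_1,s_2$ and two outputs $t_1,t_2$. - Four vertices $a,b,p,q$. - Edges: - $s_1$–$a$, $a$–$p$, $p$–$t_1$; - $s_2$–$b$, $b$–$q$, $q$–$t_2$; - two "diagonal" edges $a$–$q$ and $b$–$p$. Local orderings $L_1$: - at $a$: $1=(s_1a)$, $2=(ap)$, $3=(aq)$; - at $b$: $1=(s_2b)$, $2=(bq)$, $3=(bp)$; - at $p$: $1=(pt_1)$, $2=(bp)$, $3=(ap)$; - at $q$: $1=(qt_2)$, $2=(aq)$, $3=(bq)$. All four vertices have valence type $(2,2,2)$, so a Version II assignment is a single tensor $\mathcal T\in(\mathbb{C}^2)^{\otimes3}$ placed at every vertex according to $L_1$. Then for every such $\mathcal T$ the resulting map $\beta(G,c,L_1;\mathcal T):\mathbb{C}^2\otimes\mathbb{C}^2\to\mathbb{C}^2\otimes\mathbb{C}^2$ has rank at most $3$. Hence $\mathrm{QMF}(G,c,L_1)\le3<4=\mathrm{QMC}(G,c)$.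
   Context: A tensor network template $(G,c)$ consists of a finite undirected graph $G$ with edge set $E$ whose vertex set is partitioned as $S\sqcup T\sqcup V$. Every element of $S$ (inputs) and every element of $T$ (outputs) is an open end of degree $1$; the elements of $V$ are called vertices. For $u\in S\sqcup T$, $e(u)$ denotes the edge incident to $u$. A capacity function $c:E\to\mathbb{Z}_{>0}$ is given, and to each edge $e$ one associates $\mathbb{C}^{c_e}$ with a fixed basis. A local ordering $L$ fixes, at each vertex $v$ of degree $d_v$, an ordering $e(v,1),\dots,e(v,d_v)$ of the incident edge-ends. Given a tensor $\mathcal T_v\in\bigotimes_{i=1}^{d_v}\mathbb{C}^{c_{e(v,i)}}$ at each vertex, let $V_S=\bigotimes_{u\in S}\mathbb{C}^{c_{e(u)}}$ and $V_T=\bigotimes_{u\in T}\mathbb{C}^{c_{e(u)}}$. Contracting the network along all edges gives $\beta\in\mathrm{Hom}(V_S,V_T)$, whose matrix entries are $\langle I_T|\beta|I_S\rangle=\sum_W\prod_{v\in V}(\mathcal T_v)_{W|_v}$. Here $W$ ranges over all assignments of basis indices to all edges that agree with $I_S$ on input edges and $I_T$ on output edges, and $W|_v$ is the tuple of indices on $e(v,1),\dots,e(v,d_v)$, so that the $i$-th tensor index at $v$ is contracted with edge $e(v,i)$. Version II: the valence type of $v$ is the sequence $B_v=(c_{e(v,1)},\dots,c_{e(v,d_v)})$. A Version II assignment chooses one tensor $\mathcal T_B\in\bigotimes_i\mathbb{C}^{m_i}$ for each valence type $B=(m_1,\dots,m_k)$ occurring, and places $\mathcal T_{B_v}$ at each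 vertex $v$. The result is denoted $\beta(G,c,L;\mathcal T)$, and $\mathrm{QMF}(G,c,L)$ is its maximal rank over all Version II assignments. An edge cut set is a set $C\subseteq E$ for which there is a partition $S\sqcup T\sqcup V=\bar S\sqcup\bar T$ with $S\subseteq\bar S$, $T\subseteq\bar T$, and $C$ equal to the set of edges having one endpoint in $\bar S$ and the other in $\bar T$. The quantum min-cut is $\mathrm{QMC}(G,c)=\min_C\prod_{e\in C}c_e$, the minimum taken over all edge cut sets $C$. *)

theory Defs
  imports "Jordan_Normal_Form.DL_Rank"
begin

datatype node = S1 | S2 | T1 | T2 | A | B | P | Q

datatype edge = E_s1a | E_ap | E_pt1 | E_s2b | E_bq | E_qt2 | E_aq | E_bp

fun ends :: "edge \<Rightarrow> node \<times> node" where
  "ends E_s1a = (S1, A)" | "ends E_ap = (A, P)" | "ends E_pt1 = (P, T1)"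
| "ends E_s2b = (S2, B)" | "ends E_bq = (B, Q)" | "ends E_qt2 = (Q, T2)"
| "ends E_aq = (A, Q)" | "ends E_bp = (B, P)"

definition cap :: "edge \<Rightarrow> nat" where "cap e = 2"

fun L1 :: "node \<Rightarrow> edge list" where
  "L1 A = [E_s1a, E_ap, E_aq]"
| "L1 B = [E_s2b, E_bq, E_bp]"
| "L1 P = [E_pt1, E_bp, E_ap]"
| "L1 Q = [E_qt2, E_aq, E_bq]"
| "L1 _ = []"

definition vertices :: "node set" where "vertices = {A, B, P, Q}"

text \<open>Version II: one tensor T in (C^2)^{\<otimes>3} (indices 0,1) placed at every vertex.
  Matrix entry <I_T|beta|I_S> with I_S = (i1,i2), I_T = (j1,j2).\<close>
definition beta_entry :: "(nat \<Rightarrow> nat \<Rightarrow> nat \<Rightarrow> complex) \<Rightarrow> nat \<Rightarrow> nat \<Rightarrow> nat \<Rightarrow> nat \<Rightarrow> complex" where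
  "beta_entry T j1 j2 i1 i2 =
     (\<Sum>W\<in>{W :: edge \<Rightarrow> nat. (\<forall>e. W e < cap e) \<and> W E_s1a = i1 \<and> W E_s2b = i2
                              \<and> W E_pt1 = j1 \<and> W E_qt2 = j2}.
        \<Prod>v\<in>vertices. T (W (L1 v ! 0)) (W (L1 v ! 1)) (W (L1 v ! 2)))"

definition beta_mat :: "(nat \<Rightarrow> nat \<Rightarrow> nat \<Rightarrow> complex) \<Rightarrow> complex mat" where
  "beta_mat T = mat 4 4 (\<lambda>(r, c). beta_entry T (r div 2) (r mod 2) (c div 2) (c mod 2))"

definition QMF :: nat where
  "QMF = Max {vec_space.rank 4 (beta_mat T) | T. True}"

definition is_cut :: "edge set \<Rightarrow> bool" where
  "is_cut C \<longleftrightarrow> (\<exists>Sbar :: node set. S1 \<in> Sbar \<and> S2 \<in> Sbar \<and> T1 \<notin> Sbar \<and> T2 \<notin> Sbar \<and>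
      C = {e. (fst (ends e) \<in> Sbar) \<noteq> (snd (ends e) \<in> Sbar)})"

definition QMC :: nat where
  "QMC = Min {\<Prod>e\<in>C. cap e | C. is_cut C}"

end

theory Submission
  imports Defs
begin

text \<open>Read the common tensor \<open>T\<close> as the family of 2x2 matrices \<open>M k = (T k x y)\<close>,
  indexed by the edge in position 1. Under \<open>L\<^sub>1\<close> the inner edges in positions 2 and 3
  link the vertices into the consistently oriented cycle \<open>a, q, b, p\<close>, so that
  \<open>\<langle>j\<^sub>1 j\<^sub>2|\<beta>|i\<^sub>1 i\<^sub>2\<rangle> = tr (M i\<^sub>1 M j\<^sub>2 M i\<^sub>2 M j\<^sub>1)\<close>. Cyclicity of the trace makes the
  columns of \<open>\<beta>\<close> for the inputs \<open>01\<close> and \<open>10\<close> coincide, hence rank \<open>\<le> 3\<close>.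
  Every cut meets both disjoint input-output paths, and \<open>{s\<^sub>1a, s\<^sub>2b}\<close> is a cut,
  so the quantum min-cut is \<open>2\<^sup>2 = 4\<close>.\<close>

definition cyclic_trace ::
  "nat \<Rightarrow> (nat \<Rightarrow> nat \<Rightarrow> nat \<Rightarrow> 'a::comm_semiring_1) \<Rightarrow> nat \<Rightarrow> nat \<Rightarrow> nat \<Rightarrow> nat \<Rightarrow> 'a" where
  "cyclic_trace n T a b c d =
     (\<Sum>x<n. \<Sum>y<n. \<Sum>z<n. \<Sum>w<n. T a x y * T b y z * T c z w * T d w x)"

lemma cyclic_trace_rotate: "cyclic_trace n T a b c d = cyclic_trace n T b c d a"
proof -
  have "cyclic_trace n T a b c d =
      (\<Sum>x<n. \<Sum>y<n. \<Sum>z<n. \<Sum>w<n. T b x y * T c y z * T d z w * T a w x)"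
    unfolding cyclic_trace_def
    by (subst sum.swap) (subst (2) sum.swap, subst (3) sum.swap, simp add: ac_simps)
  then show ?thesis by (simp add: cyclic_trace_def)
qed

lemma cyclic_trace_swap_0_1:
  assumes "b < 2" "d < 2"
  shows "cyclic_trace n T 0 b 1 d = cyclic_trace n T 1 b 0 d"
proof -
  have rotate2: "cyclic_trace n T a b' c d' = cyclic_trace n T c d' a b'" for a b' c d'
    using cyclic_trace_rotate by metis
  consider "b = d" | "b = 1" "d = 0" | "b = 0" "d = 1" using assms by linarith
  then show ?thesis
    by cases (use rotate2 cyclic_trace_rotate in metis)+
qed

definition edge_assignment :: "nat \<Rightarrow> nat \<Rightarrow> nat \<Rightarrow> nat \<Rightarrow> nat \<times> nat \<times> nat \<times> nat \<Rightarrow> edge \<Rightarrow> nat" where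
  "edge_assignment i1 i2 j1 j2 = (\<lambda>(x, y, z, w) e. case e of
       E_s1a \<Rightarrow> i1 | E_s2b \<Rightarrow> i2 | E_pt1 \<Rightarrow> j1 | E_qt2 \<Rightarrow> j2
     | E_ap \<Rightarrow> x | E_aq \<Rightarrow> y | E_bq \<Rightarrow> z | E_bp \<Rightarrow> w)"

lemma inj_on_edge_assignment: "inj_on (edge_assignment i1 i2 j1 j2) X"
  by (auto simp: inj_on_def edge_assignment_def fun_eq_iff split: edge.split) (metis edge.simps)+

lemma boundary_assignments_eq_image:
  assumes "i1 < 2" "i2 < 2" "j1 < 2" "j2 < 2"
  shows "{W :: edge \<Rightarrow> nat. (\<forall>e. W e < cap e) \<and> W E_s1a = i1 \<and> W E_s2b = i2
                              \<and> W E_pt1 = j1 \<and> W E_qt2 = j2}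
       = edge_assignment i1 i2 j1 j2 ` ({..<2} \<times> {..<2} \<times> {..<2} \<times> {..<2})"
    (is "?W = ?image")
proof (intro subset_antisym subsetI)
  fix W assume W: "W \<in> ?W"
  then have "W = edge_assignment i1 i2 j1 j2 (W E_ap, W E_aq, W E_bq, W E_bp)"
    by (auto simp: edge_assignment_def fun_eq_iff split: edge.split)
  moreover have "(W E_ap, W E_aq, W E_bq, W E_bp) \<in> {..<2} \<times> {..<2} \<times> {..<2} \<times> {..<2}"
    using W by (simp add: cap_def)
  ultimately show "W \<in> ?image" by blast
next
  fix W assume "W \<in> ?image"
  then show "W \<in> ?W"
    using assms by (auto simp: edge_assignment_def cap_def split: edge.split)
qed

lemma beta_entry_eq_cyclic_trace:
  assumes "i1 < 2" "i2 < 2" "j1 < 2" "j2 < 2"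
  shows "beta_entry T j1 j2 i1 i2 = cyclic_trace 2 T i1 j2 i2 j1"
proof -
  let ?g = "edge_assignment i1 i2 j1 j2"
  have "beta_entry T j1 j2 i1 i2 =
      (\<Sum>p\<in>{..<2} \<times> {..<2} \<times> {..<2} \<times> {..<2}.
         \<Prod>v\<in>vertices. T (?g p (L1 v ! 0)) (?g p (L1 v ! 1)) (?g p (L1 v ! 2)))"
    unfolding beta_entry_def boundary_assignments_eq_image[OF assms]
    by (subst sum.reindex[OF inj_on_edge_assignment]) simp
  also have "\<dots> = (\<Sum>(x, y, z, w)\<in>{..<2} \<times> {..<2} \<times> {..<2} \<times> {..<2}.
      T i1 x y * T j2 y z * T i2 z w * T j1 w x)"
    by (rule sum.cong) (auto simp: vertices_def edge_assignment_def ac_simps)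
  finally show ?thesis
    by (simp add: cyclic_trace_def sum.cartesian_product)
qed

lemma (in vec_space) rank_less_if_equal_cols:
  assumes "M \<in> carrier_mat n n" "i < j" "j < n" "col M i = col M j"
  shows "rank M < n"
proof (rule non_distinct_low_rank[OF assms(1)])
  have "cols M ! i = cols M ! j" "i < length (cols M)" "j < length (cols M)"
    using assms by auto
  then show "\<not> distinct (cols M)"
    using \<open>i < j\<close> nth_eq_iff_index_eq by fastforce
qed

lemma beta_mat_col_01_eq_col_10: "col (beta_mat T) 1 = col (beta_mat T) 2"
proof (rule eq_vecI)
  fix r assume "r < dim_vec (col (beta_mat T) 2)"
  then have "r < 4" by (simp add: beta_mat_def)
  moreover have "cyclic_trace 2 T 0 (r mod 2) 1 (r div 2) = cyclic_trace 2 T 1 (r mod 2) 0 (r div 2)"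
    using \<open>r < 4\<close> by (intro cyclic_trace_swap_0_1) auto
  ultimately show "col (beta_mat T) 1 $ r = col (beta_mat T) 2 $ r"
    by (simp add: beta_mat_def beta_entry_eq_cyclic_trace)
qed (simp add: beta_mat_def)

lemma rank_beta_mat_le_3: "vec_space.rank 4 (beta_mat T) \<le> 3"
  using vec_space.rank_less_if_equal_cols[of "beta_mat T" 4 1 2, OF _ _ _ beta_mat_col_01_eq_col_10]
  by (simp add: beta_mat_def)

lemma QMF_le_3: "QMF \<le> 3"
proof -
  let ?ranks = "{vec_space.rank 4 (beta_mat T) | T. True}"
  have "?ranks \<subseteq> {..3}" using rank_beta_mat_le_3 by auto
  then have "finite ?ranks" by (rule finite_subset) simp
  moreover have "?ranks \<noteq> {}" by auto
  ultimately show ?thesis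
    unfolding QMF_def using rank_beta_mat_le_3 by (auto simp: Max_le_iff)
qed

lemma UNIV_edge: "(UNIV :: edge set) = {E_s1a, E_ap, E_pt1, E_s2b, E_bq, E_qt2, E_aq, E_bp}"
  using edge.exhaust by blast

instance edge :: finite
  by standard (simp add: UNIV_edge)

lemma two_le_card_cut:
  assumes "is_cut C"
  shows "2 \<le> card C"
proof -
  obtain Sbar where S: "S1 \<in> Sbar" "S2 \<in> Sbar" "T1 \<notin> Sbar" "T2 \<notin> Sbar"
    and C: "C = {e. (fst (ends e) \<in> Sbar) \<noteq> (snd (ends e) \<in> Sbar)}"
    using assms unfolding is_cut_def by blast
  have "E_s1a \<in> C \<or> E_ap \<in> C \<or> E_pt1 \<in> C" using S unfolding C by auto
  then obtain e1 where e1: "e1 \<in> {E_s1a, E_ap, E_pt1}" "e1 \<in> C" by blast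
  have "E_s2b \<in> C \<or> E_bq \<in> C \<or> E_qt2 \<in> C" using S unfolding C by auto
  then obtain e2 where e2: "e2 \<in> {E_s2b, E_bq, E_qt2}" "e2 \<in> C" by blast
  have "card {e1, e2} = 2" using e1 e2 by auto
  moreover have "card {e1, e2} \<le> card C" using e1 e2 by (intro card_mono) auto
  ultimately show ?thesis by simp
qed

lemma QMC_eq_4: "QMC = 4"
proof -
  let ?caps = "{\<Prod>e\<in>C. cap e | C. is_cut C}"
  have prod_cap: "(\<Prod>e\<in>C. cap e) = 2 ^ card C" for C by (simp add: cap_def)
  have "finite ?caps"
    by (rule finite_subset[of _ "(\<lambda>C. \<Prod>e\<in>C. cap e) ` UNIV"]) auto
  moreover have "4 \<le> y" if "y \<in> ?caps" for y
  proof -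
    obtain C where "is_cut C" "y = 2 ^ card C" using \<open>y \<in> ?caps\<close> prod_cap by auto
    with two_le_card_cut show ?thesis
      using power_increasing[of 2 "card C" "2::nat"] by auto
  qed
  moreover have "is_cut {E_s1a, E_s2b}"
    unfolding is_cut_def
    by (rule exI[of _ "{S1, S2}"]) (auto intro: edge.exhaust elim: ends.elims)
  then have "4 \<in> ?caps" using prod_cap[of "{E_s1a, E_s2b}"] by force
  ultimately show ?thesis unfolding QMC_def by (intro Min_eqI) auto
qed

theorem mainTheorem10:
  shows "(\<forall>T :: nat \<Rightarrow> nat \<Rightarrow> nat \<Rightarrow> complex. vec_space.rank 4 (beta_mat T) \<le> 3)
         \<and> QMF \<le> 3 \<and> QMF < QMC \<and> QMC = 4"
  using rank_beta_mat_le_3 QMF_le_3 QMC_eq_4 by auto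

end
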